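(* Let $G=(V,E)$ be a connected undirected graph with labeled nodes $1,\dots,n_l$ ($1\le n_l<n$) and edge costs $d_e>0$, and let $p$ be an unlabeled node. Suppose there is a unique path of minimal total cost $\sum_e d_e$ among all paths from the set of labeled nodes to $p$, and let $i^*(p)$ be its labeled endpoint. Then as $\lambda\to\infty$, the flow-based prediction weights satisfy $w_{i^*(p)}(p)\to1$ and $w_i(p)\to0$ for all $i\ne i^*(p)$; i.e. the flow-based prediction converges to the 1-nearest-neighbor prediction $f(i^*(p))$ (nearest with respect to shortest-path distance with edge lengths $d_e$).
   Context: Orient each edge arbitrarily; let $A$ be the $n\times m$ signed incidence matrix ($A_{ie}=+1$, $A_{je}=-1$ for $e$ oriented from $i$ to $j$), $A_l$ its rows $1,\dots,n_l$, $A_u$ its remaining rows. For unlabeled $p$, $\vec b_p\in\mathbb R^{n-n_l}$ is zero except $-1$ at the entry of $p$. For $\lambda\ge0$, the flow $\vec x$ is the unique minimizer of $\frac12\sum_{e=1}^m d_e(x_e^2+\lambda|x_e|)$ subject to $A_u\vec x=\vec b_p$; the weights are $\vec w(p)=A_l\vec x$ and the prediction is $f(p)=\sum_{i=1}^{n_l}w_i(p)f(i)$. *)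

theory Defs
  imports "HOL-Analysis.Analysis"
begin

text \<open>Graph: vertices 0..<n (labeled ones are 0..<nl), edges 0..<m; edge e joins
  src e and tgt e and is oriented from src e to tgt e.\<close>

definition incid :: "(nat \<Rightarrow> nat) \<Rightarrow> (nat \<Rightarrow> nat) \<Rightarrow> nat \<Rightarrow> nat \<Rightarrow> real" where
  "incid src tgt v e = (if src e = v then 1 else if tgt e = v then -1 else 0)"

definition is_path :: "nat \<Rightarrow> (nat \<Rightarrow> nat) \<Rightarrow> (nat \<Rightarrow> nat) \<Rightarrow> nat list \<Rightarrow> nat list \<Rightarrow> bool" where
  "is_path m src tgt vs es \<longleftrightarrow>
     length vs = length es + 1 \<and> distinct vs \<and>
     (\<forall>k < length es. es ! k < m \<and> {src (es ! k), tgt (es ! k)} = {vs ! k, vs ! Suc k})"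

definition connected_graph :: "nat \<Rightarrow> nat \<Rightarrow> (nat \<Rightarrow> nat) \<Rightarrow> (nat \<Rightarrow> nat) \<Rightarrow> bool" where
  "connected_graph n m src tgt \<longleftrightarrow>
     (\<forall>u < n. \<forall>v < n. \<exists>vs es. is_path m src tgt vs es \<and> hd vs = u \<and> last vs = v)"

definition path_cost :: "(nat \<Rightarrow> real) \<Rightarrow> nat list \<Rightarrow> real" where
  "path_cost d es = sum_list (map d es)"

definition lab_path :: "nat \<Rightarrow> nat \<Rightarrow> (nat \<Rightarrow> nat) \<Rightarrow> (nat \<Rightarrow> nat) \<Rightarrow> nat \<Rightarrow> nat list \<Rightarrow> nat list \<Rightarrow> bool" where
  "lab_path nl m src tgt p vs es \<longleftrightarrow> is_path m src tgt vs es \<and> hd vs < nl \<and> last vs = p"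

definition feasible_flow :: "nat \<Rightarrow> nat \<Rightarrow> nat \<Rightarrow> (nat \<Rightarrow> nat) \<Rightarrow> (nat \<Rightarrow> nat) \<Rightarrow> nat \<Rightarrow> (nat \<Rightarrow> real) \<Rightarrow> bool" where
  "feasible_flow n nl m src tgt p x \<longleftrightarrow>
     (\<forall>e. m \<le> e \<longrightarrow> x e = 0) \<and>
     (\<forall>v. nl \<le> v \<and> v < n \<longrightarrow> (\<Sum>e<m. incid src tgt v e * x e) = (if v = p then -1 else 0))"

definition flow_obj :: "nat \<Rightarrow> (nat \<Rightarrow> real) \<Rightarrow> real \<Rightarrow> (nat \<Rightarrow> real) \<Rightarrow> real" where
  "flow_obj m d lam x = (1/2) * (\<Sum>e<m. d e * ((x e)\<^sup>2 + lam * \<bar>x e\<bar>))"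

definition flow :: "nat \<Rightarrow> nat \<Rightarrow> nat \<Rightarrow> (nat \<Rightarrow> nat) \<Rightarrow> (nat \<Rightarrow> nat) \<Rightarrow> (nat \<Rightarrow> real) \<Rightarrow> nat \<Rightarrow> real \<Rightarrow> (nat \<Rightarrow> real)" where
  "flow n nl m src tgt d p lam = (THE x. feasible_flow n nl m src tgt p x \<and>
     (\<forall>y. feasible_flow n nl m src tgt p y \<longrightarrow> flow_obj m d lam x \<le> flow_obj m d lam y))"

definition flow_weight :: "nat \<Rightarrow> nat \<Rightarrow> nat \<Rightarrow> (nat \<Rightarrow> nat) \<Rightarrow> (nat \<Rightarrow> nat) \<Rightarrow> (nat \<Rightarrow> real) \<Rightarrow> nat \<Rightarrow> real \<Rightarrow> nat \<Rightarrow> real" where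
  "flow_weight n nl m src tgt d p lam i = (\<Sum>e<m. incid src tgt i e * flow n nl m src tgt d p lam e)"

definition flow_pred :: "nat \<Rightarrow> nat \<Rightarrow> nat \<Rightarrow> (nat \<Rightarrow> nat) \<Rightarrow> (nat \<Rightarrow> nat) \<Rightarrow> (nat \<Rightarrow> real) \<Rightarrow> (nat \<Rightarrow> real) \<Rightarrow> nat \<Rightarrow> real \<Rightarrow> real" where
  "flow_pred n nl m src tgt d f p lam = (\<Sum>i<nl. flow_weight n nl m src tgt d p lam i * f i)"

end

theory Submission
  imports Defs
begin

text \<open>
  For every potential \<open>\<pi>\<close> on the vertices and every feasible flow \<open>x\<close>,
  \<open>\<Sum>\<^sub>e (\<pi>(tgt e) - \<pi>(src e)) x\<^sub>e = \<pi>(p) - \<Sum>\<^sub>i \<pi>(i) w\<^sub>i\<close>, and if \<open>\<pi>\<close> is 1-Lipschitz for the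
  edge costs the left side is at most the linear cost \<open>\<Sum>\<^sub>e d\<^sub>e |x\<^sub>e|\<close>.  Take for \<open>\<pi>\<close> the
  distance to the labeled set, perturbed by \<open>\<plusminus>s\<close> at a labeled node \<open>k\<close> other than the
  nearest one; the cost gap between the shortest labeled path and every path from \<open>k\<close> then gives
  \<open>s |w\<^sub>k| \<le> \<Sum>\<^sub>e d\<^sub>e |x\<^sub>e| - dist(p)\<close>.  Comparing the optimal flow with the unit flow along
  the shortest path shows that this excess is \<open>O(1/\<lambda>)\<close>, so \<open>w\<^sub>k \<rightarrow> 0\<close>; the weight of the
  nearest node tends to 1 because the weights always sum to 1.
\<close>

lemma abs_le_square_plus_one: "\<bar>a::real\<bar> \<le> a\<^sup>2 + 1"
proof (cases "\<bar>a\<bar> \<le> 1")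
  case True
  thus ?thesis using zero_le_power2[of a] by linarith
next
  case False
  hence "\<bar>a\<bar> * 1 \<le> \<bar>a\<bar> * \<bar>a\<bar>" by (intro mult_left_mono) auto
  thus ?thesis by (simp add: power2_eq_square)
qed

lemma weighted_midpoint_penalty_le:
  fixes a b lam w :: real
  assumes "0 \<le> lam" "0 \<le> w"
  shows "w * (((a + b) / 2)\<^sup>2 + lam * \<bar>(a + b) / 2\<bar>)
    \<le> (w * (a\<^sup>2 + lam * \<bar>a\<bar>) + w * (b\<^sup>2 + lam * \<bar>b\<bar>)) / 2 - w * (a - b)\<^sup>2 / 4"
proof -
  have "lam * \<bar>(a + b) / 2\<bar> \<le> lam * ((\<bar>a\<bar> + \<bar>b\<bar>) / 2)"
    using assms by (intro mult_left_mono) (auto simp: abs_triangle_ineq)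
  hence "((a + b) / 2)\<^sup>2 + lam * \<bar>(a + b) / 2\<bar>
      \<le> ((a\<^sup>2 + lam * \<bar>a\<bar>) + (b\<^sup>2 + lam * \<bar>b\<bar>)) / 2 - (a - b)\<^sup>2 / 4"
    by (simp add: power2_eq_square field_simps)
  from mult_left_mono[OF this assms(2)] show ?thesis by (simp add: algebra_simps)
qed

lemma continuous_on_coordinate [continuous_intros]: "continuous_on S (\<lambda>x::nat \<Rightarrow> real. x e)"
  by (rule continuous_on_subset[OF continuous_on_product_coordinates]) simp

lemma continuous_on_flow_obj: "continuous_on S (flow_obj m d lam)"
  unfolding flow_obj_def by (intro continuous_intros)

locale weighted_graph =
  fixes n m :: nat and src tgt :: "nat \<Rightarrow> nat" and d :: "nat \<Rightarrow> real"
  assumes edge_ends: "\<forall>e < m. src e < n \<and> tgt e < n \<and> src e \<noteq> tgt e"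
    and cost_pos: "\<forall>e < m. d e > 0"
begin

inductive walk :: "nat \<Rightarrow> nat \<Rightarrow> real \<Rightarrow> bool" where
  walk_Nil: "walk u u 0"
| walk_fwd: "walk u w c \<Longrightarrow> e < m \<Longrightarrow> src e = w \<Longrightarrow> walk u (tgt e) (c + d e)"
| walk_bwd: "walk u w c \<Longrightarrow> e < m \<Longrightarrow> tgt e = w \<Longrightarrow> walk u (src e) (c + d e)"

lemma walk_cost_nonneg: "walk u v c \<Longrightarrow> 0 \<le> c"
  by (induction rule: walk.induct) (use cost_pos in \<open>fastforce+\<close>)

lemma walk_cost_ge_edge: "walk u v c \<Longrightarrow> u \<noteq> v \<Longrightarrow> \<exists>e<m. d e \<le> c"
  by (induction rule: walk.induct) (use cost_pos walk_cost_nonneg in \<open>fastforce+\<close>)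

lemma path_edges_less: "is_path m src tgt vs es \<Longrightarrow> set es \<subseteq> {..<m}"
  unfolding is_path_def by (auto simp: in_set_conv_nth)

lemma path_cost_take_le: "set es \<subseteq> {..<m} \<Longrightarrow> path_cost d (take i es) \<le> path_cost d es"
proof (induction es arbitrary: i)
  case Nil
  thus ?case by (simp add: path_cost_def)
next
  case (Cons a es)
  have "0 \<le> sum_list (map d es)"
    using Cons.prems cost_pos by (intro sum_list_nonneg) fastforce
  thus ?case using Cons cost_pos by (cases i) (auto simp: path_cost_def)
qed

lemma path_append_edge:
  assumes P: "is_path m src tgt vs es" and e: "e < m" "{src e, tgt e} = {last vs, v}"
  shows "\<exists>vs' es'. is_path m src tgt vs' es' \<and> hd vs' = hd vs \<and> last vs' = v \<and>
    path_cost d es' \<le> path_cost d es + d e"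
proof -
  have L: "length vs = length es + 1" using P by (simp add: is_path_def)
  show ?thesis
  proof (cases "v \<in> set vs")
    case True
    then obtain i where i: "i < length vs" "vs ! i = v" by (auto simp: in_set_conv_nth)
    have "is_path m src tgt (take (Suc i) vs) (take i es)"
      using P i L unfolding is_path_def by auto
    moreover have "hd (take (Suc i) vs) = hd vs" using i by (cases vs) auto
    moreover have "last (take (Suc i) vs) = v" using i
      by (subst last_conv_nth) (auto simp: min_def intro: arg_cong[where f="(!) vs"])
    moreover have "path_cost d (take i es) \<le> path_cost d es + d e"
      using path_cost_take_le[OF path_edges_less[OF P], of i] cost_pos e by fastforce
    ultimately show ?thesis by blast
  next
    case False
    have "last vs = vs ! length es" using L by (cases vs rule: rev_cases) (auto simp: nth_append)
    hence "is_path m src tgt (vs @ [v]) (es @ [e])"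
      using P L False e unfolding is_path_def by (auto simp: nth_append less_Suc_eq)
    moreover have "hd (vs @ [v]) = hd vs" using L by (cases vs) auto
    ultimately show ?thesis by (intro exI[of _ "vs @ [v]"] exI[of _ "es @ [e]"]) (simp add: path_cost_def)
  qed
qed

lemma walk_imp_path:
  "walk u v c \<Longrightarrow> \<exists>vs es. is_path m src tgt vs es \<and> hd vs = u \<and> last vs = v \<and> path_cost d es \<le> c"
proof (induction rule: walk.induct)
  case (walk_Nil u)
  show ?case by (intro exI[of _ "[u]"] exI[of _ "[]"]) (simp add: is_path_def path_cost_def)
next
  case (walk_fwd u w c e)
  with path_append_edge[of _ _ e "tgt e"] show ?case by fastforce
next
  case (walk_bwd u w c e)
  with path_append_edge[of _ _ e "src e"] show ?case by fastforce
qed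

lemma path_imp_walk:
  assumes P: "is_path m src tgt vs es"
  shows "walk (hd vs) (last vs) (path_cost d es)"
proof -
  have L: "length vs = length es + 1" and D: "distinct vs" using P by (auto simp: is_path_def)
  have "walk (hd vs) (vs ! k) (path_cost d (take k es))" if "k \<le> length es" for k
    using that
  proof (induction k)
    case 0
    thus ?case using L by (cases vs) (auto simp: path_cost_def intro: walk_Nil)
  next
    case (Suc k)
    hence k: "k < length es" by simp
    let ?e = "es ! k"
    have e: "?e < m" "{src ?e, tgt ?e} = {vs ! k, vs ! Suc k}" using P k by (auto simp: is_path_def)
    have ne: "vs ! k \<noteq> vs ! Suc k" using D L k by (simp add: nth_eq_iff_index_eq)
    have cost: "path_cost d (take (Suc k) es) = path_cost d (take k es) + d ?e"
      using k by (simp add: take_Suc_conv_app_nth path_cost_def)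
    have IH: "walk (hd vs) (vs ! k) (path_cost d (take k es))" using Suc k by simp
    show ?case
    proof (cases "src ?e = vs ! k")
      case True
      hence "tgt ?e = vs ! Suc k" using e ne by (auto simp: doubleton_eq_iff)
      thus ?thesis using walk_fwd[OF IH e(1) True] cost by simp
    next
      case False
      hence "src ?e = vs ! Suc k" "tgt ?e = vs ! k" using e ne by (auto simp: doubleton_eq_iff)
      thus ?thesis using walk_bwd[OF IH e(1)] cost by simp
    qed
  qed
  from this[of "length es"] show ?thesis using L
    by (cases vs rule: rev_cases) (auto simp: nth_append)
qed

lemma path_vertices_less:
  assumes P: "is_path m src tgt vs es" and "last vs < n"
  shows "set vs \<subseteq> {..<n}"
proof
  fix v assume "v \<in> set vs"
  then obtain k where k: "k < length vs" "v = vs ! k" by (auto simp: in_set_conv_nth)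
  have L: "length vs = length es + 1" using P by (simp add: is_path_def)
  show "v \<in> {..<n}"
  proof (cases "k < length es")
    case True
    hence "es ! k < m" "vs ! k \<in> {src (es ! k), tgt (es ! k)}" using P by (auto simp: is_path_def)
    thus ?thesis using edge_ends k by auto
  next
    case False
    hence "k = length es" using k L by simp
    hence "v = last vs" using k L by (subst last_conv_nth) auto
    thus ?thesis using assms by simp
  qed
qed

lemma finite_paths_ending_at:
  assumes "v < n"
  shows "finite {(vs, es). is_path m src tgt vs es \<and> last vs = v}"
proof (rule finite_subset)
  show "finite ({vs. set vs \<subseteq> {..<n} \<and> length vs \<le> n} \<times> {es. set es \<subseteq> {..<m} \<and> length es \<le> n})"
    by (intro finite_cartesian_product finite_lists_length_le) auto
  have "set vs \<subseteq> {..<n} \<and> length vs \<le> n \<and> set es \<subseteq> {..<m} \<and> length es \<le> n"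
    if P: "is_path m src tgt vs es" "last vs = v" for vs es
  proof -
    have "set vs \<subseteq> {..<n}" using path_vertices_less P assms by simp
    moreover have "distinct vs" "length vs = length es + 1" using P by (auto simp: is_path_def)
    ultimately show ?thesis using distinct_card card_mono[of "{..<n}" "set vs"] path_edges_less[OF P(1)]
      by fastforce
  qed
  thus "{(vs, es). is_path m src tgt vs es \<and> last vs = v} \<subseteq>
      {vs. set vs \<subseteq> {..<n} \<and> length vs \<le> n} \<times> {es. set es \<subseteq> {..<m} \<and> length es \<le> n}"
    by auto
qed

text \<open>The entry \<open>(A x)\<^sub>v\<close>; for labeled \<open>v\<close> and the optimal flow this is the weight \<open>w\<^sub>v(p)\<close>.\<close>
definition net_outflow :: "(nat \<Rightarrow> real) \<Rightarrow> nat \<Rightarrow> real" where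
  "net_outflow x v = (\<Sum>e<m. incid src tgt v e * x e)"

definition flow_cost :: "(nat \<Rightarrow> real) \<Rightarrow> real" where
  "flow_cost x = (\<Sum>e<m. d e * \<bar>x e\<bar>)"

definition unit_flow :: "(nat \<Rightarrow> real) \<Rightarrow> nat \<Rightarrow> nat \<Rightarrow> bool" where
  "unit_flow x u v \<longleftrightarrow> (\<forall>e. m \<le> e \<longrightarrow> x e = 0) \<and>
     (\<forall>w. net_outflow x w = (if w = u then 1 else 0) - (if w = v then 1 else 0))"

lemma incid_eq: "e < m \<Longrightarrow> incid src tgt w e = (if w = src e then 1 else 0) - (if w = tgt e then 1 else 0)"
  using edge_ends by (auto simp: incid_def)

lemma unit_flow_append_edge:
  assumes x: "unit_flow x u w" and e: "e < m" "{src e, tgt e} = {w, v}"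
  shows "\<exists>x'. unit_flow x' u v \<and> flow_cost x' \<le> flow_cost x + d e"
proof -
  define \<sigma> :: real where "\<sigma> = (if src e = w then 1 else -1)"
  define x' where "x' = (\<lambda>e'. x e' + (if e' = e then \<sigma> else 0))"
  have sum_upd: "(\<Sum>e'<m. g e' * x' e') = (\<Sum>e'<m. g e' * x e') + g e * \<sigma>" for g
    using e(1) by (simp add: x'_def distrib_left sum.distrib if_distrib[of "\<lambda>t. g _ * t"] cong: if_cong)
  have "incid src tgt v' e * \<sigma> = (if v' = w then 1 else 0) - (if v' = v then 1 else 0)" for v'
    using e edge_ends by (auto simp: incid_eq \<sigma>_def doubleton_eq_iff)
  hence "unit_flow x' u v"
    using x e(1) sum_upd unfolding unit_flow_def net_outflow_def by (auto simp: x'_def)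
  moreover have "flow_cost x' \<le> (\<Sum>e'<m. d e' * (\<bar>x e'\<bar> + (if e' = e then 1 else 0)))"
    unfolding flow_cost_def x'_def \<sigma>_def using cost_pos
    by (intro sum_mono) (auto intro!: mult_left_mono)
  moreover have "(\<Sum>e'<m. d e' * (\<bar>x e'\<bar> + (if e' = e then 1 else 0))) = flow_cost x + d e"
    using e(1) by (simp add: flow_cost_def distrib_left sum.distrib if_distrib[of "\<lambda>t. d _ * t"] cong: if_cong)
  ultimately show ?thesis by auto
qed

lemma walk_imp_unit_flow: "walk u v c \<Longrightarrow> \<exists>x. unit_flow x u v \<and> flow_cost x \<le> c"
proof (induction rule: walk.induct)
  case (walk_Nil u)
  show ?case by (intro exI[of _ "\<lambda>_. 0"]) (simp add: unit_flow_def net_outflow_def flow_cost_def)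
next
  case (walk_fwd u w c e)
  with unit_flow_append_edge[of _ u w e "tgt e"] show ?case by fastforce
next
  case (walk_bwd u w c e)
  with unit_flow_append_edge[of _ u w e "src e"] show ?case by fastforce
qed

end

locale labeled_graph = weighted_graph +
  fixes nl p :: nat
  assumes labeled_nonempty: "1 \<le> nl" and target_unlabeled: "nl \<le> p" "p < n"
    and connected: "connected_graph n m src tgt"
begin

abbreviation feasible :: "(nat \<Rightarrow> real) \<Rightarrow> bool" where
  "feasible x \<equiv> feasible_flow n nl m src tgt p x"

lemma walk_exists: "u < n \<Longrightarrow> v < n \<Longrightarrow> \<exists>c. walk u v c"
  using connected path_imp_walk unfolding connected_graph_def by blast

lemma unit_flow_imp_feasible: "unit_flow x i p \<Longrightarrow> i < nl \<Longrightarrow> feasible x"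
  by (auto simp: unit_flow_def feasible_flow_def net_outflow_def)

lemma potential_balance:
  assumes "feasible x"
  shows "(\<Sum>e<m. (\<pi> (tgt e) - \<pi> (src e)) * x e) = \<pi> p - (\<Sum>i<nl. \<pi> i * net_outflow x i)"
proof -
  have incid_sum: "(\<Sum>v<n. \<pi> v * incid src tgt v e) = \<pi> (src e) - \<pi> (tgt e)" if e: "e < m" for e
  proof -
    have "(\<Sum>v<n. \<pi> v * incid src tgt v e)
        = (\<Sum>v<n. (if v = src e then \<pi> v else 0) - (if v = tgt e then \<pi> v else 0))"
      using incid_eq[OF e] by (intro sum.cong) auto
    also have "\<dots> = \<pi> (src e) - \<pi> (tgt e)" using edge_ends e by (simp add: sum_subtractf)
    finally show ?thesis .
  qed
  have "(\<Sum>v<n. \<pi> v * net_outflow x v) = (\<Sum>e<m. (\<Sum>v<n. \<pi> v * incid src tgt v e) * x e)"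
    unfolding net_outflow_def
    by (simp add: sum_distrib_left sum_distrib_right mult.assoc sum.swap[of _ "{..<n}"])
  also have "\<dots> = - (\<Sum>e<m. (\<pi> (tgt e) - \<pi> (src e)) * x e)"
    by (simp add: incid_sum sum_negf[symmetric] algebra_simps)
  finally have all: "(\<Sum>v<n. \<pi> v * net_outflow x v) = - (\<Sum>e<m. (\<pi> (tgt e) - \<pi> (src e)) * x e)" .
  have "(\<Sum>v<n. \<pi> v * net_outflow x v)
      = (\<Sum>v<nl. \<pi> v * net_outflow x v) + (\<Sum>v\<in>{nl..<n}. \<pi> v * net_outflow x v)"
    using target_unlabeled by (simp add: lessThan_atLeast0 sum.atLeastLessThan_concat)
  also have "(\<Sum>v\<in>{nl..<n}. \<pi> v * net_outflow x v) = (\<Sum>v\<in>{nl..<n}. if v = p then - \<pi> v else 0)"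
    using assms unfolding feasible_flow_def net_outflow_def by (intro sum.cong) auto
  also have "\<dots> = - \<pi> p" using target_unlabeled by simp
  finally have "(\<Sum>v<n. \<pi> v * net_outflow x v) = (\<Sum>v<nl. \<pi> v * net_outflow x v) - \<pi> p"
    by simp
  thus ?thesis using all by simp
qed

lemma net_outflow_labeled_sum: "feasible x \<Longrightarrow> (\<Sum>i<nl. net_outflow x i) = 1"
  using potential_balance[of x "\<lambda>_. 1"] by simp

lemma lipschitz_potential_le_flow_cost:
  assumes "feasible x" and lip: "\<forall>e<m. \<bar>\<pi> (src e) - \<pi> (tgt e)\<bar> \<le> d e"
  shows "\<pi> p - (\<Sum>i<nl. \<pi> i * net_outflow x i) \<le> flow_cost x"
proof -
  have "(\<pi> (tgt e) - \<pi> (src e)) * x e \<le> d e * \<bar>x e\<bar>" if "e < m" for e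
  proof -
    have "\<bar>\<pi> (tgt e) - \<pi> (src e)\<bar> * \<bar>x e\<bar> \<le> d e * \<bar>x e\<bar>"
      using lip that by (intro mult_right_mono) (auto simp: abs_minus_commute)
    thus ?thesis by (metis abs_ge_self abs_mult order_trans)
  qed
  hence "(\<Sum>e<m. (\<pi> (tgt e) - \<pi> (src e)) * x e) \<le> flow_cost x"
    unfolding flow_cost_def by (intro sum_mono) auto
  thus ?thesis using potential_balance[OF assms(1)] by simp
qed

definition potential :: "(nat \<Rightarrow> real) \<Rightarrow> nat \<Rightarrow> real" where
  "potential \<delta> v = Inf {\<delta> j + c | j c. j < nl \<and> walk j v c}"

lemma potential_le:
  assumes "\<forall>j. -B \<le> \<delta> j" "j < nl" "walk j v c"
  shows "potential \<delta> v \<le> \<delta> j + c"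
  unfolding potential_def
proof (rule cInf_lower)
  show "\<delta> j + c \<in> {\<delta> j + c | j c. j < nl \<and> walk j v c}" using assms by blast
  show "bdd_below {\<delta> j + c | j c. j < nl \<and> walk j v c}"
  proof (rule bdd_belowI[of _ "-B"])
    fix y assume "y \<in> {\<delta> j + c | j c. j < nl \<and> walk j v c}"
    then obtain j c where "y = \<delta> j + c" "walk j v c" by blast
    thus "-B \<le> y" using spec[OF assms(1), of j] walk_cost_nonneg[of j v c] by linarith
  qed
qed

lemma potential_ge:
  assumes "v < n" "\<And>j c. j < nl \<Longrightarrow> walk j v c \<Longrightarrow> L \<le> \<delta> j + c"
  shows "L \<le> potential \<delta> v"
  unfolding potential_def
proof (rule cInf_greatest)
  obtain c where "walk 0 v c" using walk_exists[of 0 v] assms target_unlabeled by auto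
  thus "{\<delta> j + c | j c. j < nl \<and> walk j v c} \<noteq> {}" using labeled_nonempty by force
qed (use assms in auto)

lemma potential_lipschitz:
  assumes "\<forall>j. -B \<le> \<delta> j" and e: "e < m"
  shows "\<bar>potential \<delta> (src e) - potential \<delta> (tgt e)\<bar> \<le> d e"
proof -
  have "potential \<delta> (tgt e) - d e \<le> potential \<delta> (src e)"
    using edge_ends e by (intro potential_ge) (use potential_le[OF assms(1) _ walk_fwd[OF _ e refl]] in force)+
  moreover have "potential \<delta> (src e) - d e \<le> potential \<delta> (tgt e)"
    using edge_ends e by (intro potential_ge) (use potential_le[OF assms(1) _ walk_bwd[OF _ e refl]] in force)+
  ultimately show ?thesis by linarith
qed

lemma feasible_exists: "\<exists>x. feasible x"
proof -
  obtain c where "walk 0 p c" using walk_exists[of 0 p] target_unlabeled by auto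
  thus ?thesis using walk_imp_unit_flow unit_flow_imp_feasible labeled_nonempty by fastforce
qed

lemma flow_obj_eq: "flow_obj m d lam x = ((\<Sum>e<m. d e * (x e)\<^sup>2) + lam * flow_cost x) / 2"
  unfolding flow_obj_def flow_cost_def
  by (simp add: distrib_left sum.distrib sum_distrib_left algebra_simps)

lemma flow_obj_midpoint:
  assumes "0 \<le> lam"
  shows "flow_obj m d lam (\<lambda>e. (x e + y e) / 2)
    \<le> (flow_obj m d lam x + flow_obj m d lam y) / 2 - (\<Sum>e<m. d e * (x e - y e)\<^sup>2) / 8"
proof -
  let ?A = "\<lambda>e. d e * ((x e)\<^sup>2 + lam * \<bar>x e\<bar>)" and ?B = "\<lambda>e. d e * ((y e)\<^sup>2 + lam * \<bar>y e\<bar>)"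
    and ?C = "\<lambda>e. d e * (x e - y e)\<^sup>2"
  have "flow_obj m d lam (\<lambda>e. (x e + y e) / 2) \<le> 1/2 * (\<Sum>e<m. (?A e + ?B e) / 2 - ?C e / 4)"
    unfolding flow_obj_def using weighted_midpoint_penalty_le[OF assms] cost_pos
    by (intro mult_left_mono sum_mono) (auto simp: less_imp_le)
  also have "\<dots> = (flow_obj m d lam x + flow_obj m d lam y) / 2 - (\<Sum>e<m. ?C e) / 8"
    unfolding flow_obj_def by (simp add: sum_subtractf sum.distrib sum_divide_distrib[symmetric])
  finally show ?thesis .
qed

lemma compact_feasible_sublevel:
  assumes "0 \<le> lam"
  shows "compact {x. feasible x \<and> flow_obj m d lam x \<le> B}"
proof -
  define K where "K = Pi\<^sub>E UNIV (\<lambda>e. if e < m then {-(2 * B / d e + 1)..2 * B / d e + 1} else {0::real})"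
  have "compactin (product_topology (\<lambda>_. euclidean) UNIV) K"
    unfolding K_def by (subst compactin_PiE) auto
  hence "compact K" by (simp add: euclidean_product_topology)
  moreover have "closed {x. feasible x \<and> flow_obj m d lam x \<le> B}"
    unfolding feasible_flow_def flow_obj_def
    by (intro closed_Collect_conj closed_Collect_all closed_Collect_imp open_Collect_const
        closed_Collect_eq closed_Collect_le continuous_intros)
  moreover have "x \<in> K" if x: "feasible x" "flow_obj m d lam x \<le> B" for x
  proof -
    have "x e \<in> {-(2 * B / d e + 1)..2 * B / d e + 1}" if e: "e < m" for e
    proof -
      have "d e * (x e)\<^sup>2 \<le> d e * ((x e)\<^sup>2 + lam * \<bar>x e\<bar>)"
        using cost_pos e assms by (intro mult_left_mono) auto
      also have "\<dots> \<le> (\<Sum>e<m. d e * ((x e)\<^sup>2 + lam * \<bar>x e\<bar>))"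
        using e cost_pos assms by (intro member_le_sum) (auto intro!: mult_nonneg_nonneg add_nonneg_nonneg)
      also have "\<dots> \<le> 2 * B" using x by (simp add: flow_obj_def)
      finally have "(x e)\<^sup>2 \<le> 2 * B / d e" using cost_pos e by (simp add: field_simps)
      thus ?thesis using abs_le_square_plus_one[of "x e"] unfolding atLeastAtMost_iff abs_le_iff by linarith
    qed
    thus ?thesis using x by (auto simp: K_def PiE_iff feasible_flow_def)
  qed
  ultimately show ?thesis by (metis (no_types, lifting) compact_Int_closed inf.absorb_iff2 mem_Collect_eq subsetI)
qed

lemma flow_minimizer_exists:
  assumes "0 \<le> lam"
  shows "\<exists>x. feasible x \<and> (\<forall>y. feasible y \<longrightarrow> flow_obj m d lam x \<le> flow_obj m d lam y)"
proof -
  obtain x0 where x0: "feasible x0" using feasible_exists by blast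
  let ?C = "{x. feasible x \<and> flow_obj m d lam x \<le> flow_obj m d lam x0}"
  have "x0 \<in> ?C" using x0 by simp
  then obtain x where x: "x \<in> ?C" "\<forall>y\<in>?C. flow_obj m d lam x \<le> flow_obj m d lam y"
    using continuous_attains_inf[OF compact_feasible_sublevel[OF assms] _ continuous_on_flow_obj] by blast
  have "flow_obj m d lam x \<le> flow_obj m d lam y" if "feasible y" for y
    using x that by (cases "flow_obj m d lam y \<le> flow_obj m d lam x0") auto
  thus ?thesis using x by auto
qed

lemma flow_minimizer_unique:
  assumes lam: "0 \<le> lam" and x: "feasible x" and y: "feasible y"
    and min_x: "\<forall>z. feasible z \<longrightarrow> flow_obj m d lam x \<le> flow_obj m d lam z"
    and min_y: "\<forall>z. feasible z \<longrightarrow> flow_obj m d lam y \<le> flow_obj m d lam z"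
  shows "x = y"
proof
  fix e
  let ?z = "\<lambda>e. (x e + y e) / 2" and ?C = "\<lambda>e. d e * (x e - y e)\<^sup>2"
  have "feasible ?z"
    using x y unfolding feasible_flow_def
    by (auto simp: distrib_left sum.distrib sum_divide_distrib[symmetric]
        add_divide_distrib[symmetric] mult.commute[of _ "_ / 2"] times_divide_eq_right)
  hence "flow_obj m d lam x \<le> flow_obj m d lam ?z" using min_x by blast
  moreover have "flow_obj m d lam x = flow_obj m d lam y" using min_x min_y x y by (simp add: order_antisym)
  ultimately have "(\<Sum>e<m. ?C e) \<le> 0"
    using flow_obj_midpoint[OF lam, of x y] by argo
  moreover have nonneg: "\<forall>e\<in>{..<m}. 0 \<le> ?C e" using cost_pos by (auto simp: less_imp_le)
  ultimately have "\<forall>e\<in>{..<m}. ?C e = 0"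
    using sum_nonneg_eq_0_iff[of "{..<m}" ?C] sum_nonneg[of "{..<m}" ?C] by auto
  thus "x e = y e" using cost_pos x y by (cases "e < m") (force simp: feasible_flow_def)+
qed

lemma flow_is_minimizer:
  assumes "0 \<le> lam"
  shows "feasible (flow n nl m src tgt d p lam)"
    and "feasible y \<Longrightarrow> flow_obj m d lam (flow n nl m src tgt d p lam) \<le> flow_obj m d lam y"
proof -
  have "\<exists>!x. feasible x \<and> (\<forall>y. feasible y \<longrightarrow> flow_obj m d lam x \<le> flow_obj m d lam y)"
    using flow_minimizer_exists[OF assms] flow_minimizer_unique[OF assms] by blast
  from theI'[OF this] show "feasible (flow n nl m src tgt d p lam)"
    and "feasible y \<Longrightarrow> flow_obj m d lam (flow n nl m src tgt d p lam) \<le> flow_obj m d lam y"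
    unfolding flow_def by blast+
qed

end

locale unique_nearest = labeled_graph +
  fixes vs0 es0 :: "nat list"
  assumes nearest_path: "lab_path nl m src tgt p vs0 es0"
    and nearest_unique: "\<forall>vs es. lab_path nl m src tgt p vs es \<and> (vs, es) \<noteq> (vs0, es0)
      \<longrightarrow> path_cost d es0 < path_cost d es"
begin

abbreviation nearest :: nat where "nearest \<equiv> hd vs0"

abbreviation nearest_dist :: real where "nearest_dist \<equiv> path_cost d es0"

abbreviation opt_flow :: "real \<Rightarrow> nat \<Rightarrow> real" where
  "opt_flow lam \<equiv> flow n nl m src tgt d p lam"

lemma nearest_labeled: "nearest < nl"
  using nearest_path by (simp add: lab_path_def)

lemma nearest_dist_le_walk:
  assumes "j < nl" "walk j p c"
  shows "nearest_dist \<le> c"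
proof -
  obtain vs es where P: "is_path m src tgt vs es" "hd vs = j" "last vs = p" "path_cost d es \<le> c"
    using walk_imp_path[OF assms(2)] by blast
  hence "lab_path nl m src tgt p vs es" using assms(1) by (simp add: lab_path_def)
  thus ?thesis using nearest_unique P by (cases "(vs, es) = (vs0, es0)") force+
qed

lemma nearest_dist_gap:
  assumes k: "k < nl" "k \<noteq> nearest"
  shows "\<exists>g>0. \<forall>c. walk k p c \<longrightarrow> nearest_dist + g \<le> c"
proof -
  define costs where
    "costs = (\<lambda>(vs, es). path_cost d es) ` {(vs, es). is_path m src tgt vs es \<and> last vs = p \<and> hd vs = k}"
  have "finite costs" unfolding costs_def
    by (rule finite_imageI, rule finite_subset[OF _ finite_paths_ending_at[of p]])
      (use target_unlabeled in auto)
  moreover have "k < n" using k target_unlabeled by linarith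
  then obtain vs es where "is_path m src tgt vs es" "hd vs = k" "last vs = p"
    using connected target_unlabeled unfolding connected_graph_def by blast
  hence "costs \<noteq> {}" unfolding costs_def by force
  moreover have "nearest_dist < q" if "q \<in> costs" for q
    using that nearest_unique k by (auto simp: costs_def lab_path_def)
  ultimately have "nearest_dist < Min costs" by simp
  moreover have "Min costs \<le> c" if walk: "walk k p c" for c
  proof -
    obtain vs es where "is_path m src tgt vs es" "hd vs = k" "last vs = p" "path_cost d es \<le> c"
      using walk_imp_path[OF walk] by blast
    hence "path_cost d es \<in> costs" unfolding costs_def by force
    thus ?thesis using Min_le[OF \<open>finite costs\<close>] \<open>path_cost d es \<le> c\<close> by fastforce
  qed
  ultimately show ?thesis by (intro exI[of _ "Min costs - nearest_dist"]) auto
qed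

text \<open>The potential with offset \<open>\<sigma> s\<close> at \<open>k\<close> equals \<open>\<sigma> s\<close> at \<open>k\<close>, \<open>0\<close> at the other labeled
  nodes (all walks between distinct nodes cost at least \<open>s\<close>) and at least the nearest
  distance at \<open>p\<close> (walks from \<open>k\<close> to \<open>p\<close> cost at least \<open>s\<close> more).\<close>
lemma signed_weight_le_cost_excess:
  assumes k: "k < nl" "k \<noteq> nearest" and s: "0 < s" "\<forall>e<m. s \<le> d e"
    and gap: "\<forall>c. walk k p c \<longrightarrow> nearest_dist + s \<le> c" and \<sigma>: "\<sigma> = 1 \<or> \<sigma> = -1"
    and x: "feasible x"
  shows "nearest_dist - \<sigma> * s * net_outflow x k \<le> flow_cost x"
proof -
  define \<delta> where "\<delta> = (\<lambda>j. if j = k then \<sigma> * s else 0)"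
  have B: "\<forall>j. -s \<le> \<delta> j" using \<sigma> s by (auto simp: \<delta>_def)
  have long: "s \<le> c" if "walk u v c" "u \<noteq> v" for u v c
    using walk_cost_ge_edge[OF that] s by force
  have at_k: "potential \<delta> k = \<sigma> * s"
  proof (rule antisym)
    show "potential \<delta> k \<le> \<sigma> * s" using potential_le[OF B k(1) walk_Nil] by (simp add: \<delta>_def)
    show "\<sigma> * s \<le> potential \<delta> k"
    proof (rule potential_ge)
      show "k < n" using k target_unlabeled by simp
      fix j c assume "j < nl" "walk j k c"
      thus "\<sigma> * s \<le> \<delta> j + c" using long[of j k c] walk_cost_nonneg[of j k c] \<sigma> s
        by (cases "j = k") (auto simp: \<delta>_def)
    qed
  qed
  have at_labeled: "potential \<delta> j = 0" if j: "j < nl" "j \<noteq> k" for j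
  proof (rule antisym)
    show "potential \<delta> j \<le> 0" using potential_le[OF B j(1) walk_Nil] j by (simp add: \<delta>_def)
    show "0 \<le> potential \<delta> j"
    proof (rule potential_ge)
      show "j < n" using j target_unlabeled by simp
      fix j' c assume "j' < nl" "walk j' j c"
      thus "0 \<le> \<delta> j' + c" using long[of j' j c] walk_cost_nonneg[of j' j c] \<sigma> s j
        by (cases "j' = k") (auto simp: \<delta>_def)
    qed
  qed
  have at_target: "nearest_dist \<le> potential \<delta> p"
  proof (rule potential_ge)
    show "p < n" using target_unlabeled by simp
    fix j c assume "j < nl" "walk j p c"
    thus "nearest_dist \<le> \<delta> j + c" using nearest_dist_le_walk[of j c] gap \<sigma> s
      by (cases "j = k") (auto simp: \<delta>_def)
  qed
  have "(\<Sum>i<nl. potential \<delta> i * net_outflow x i) = (\<Sum>i<nl. if i = k then \<sigma> * s * net_outflow x k else 0)"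
    using at_k at_labeled by (intro sum.cong) auto
  also have "\<dots> = \<sigma> * s * net_outflow x k" using k by simp
  finally have "(\<Sum>i<nl. potential \<delta> i * net_outflow x i) = \<sigma> * s * net_outflow x k" .
  moreover have "potential \<delta> p - (\<Sum>i<nl. potential \<delta> i * net_outflow x i) \<le> flow_cost x"
    using lipschitz_potential_le_flow_cost[OF x] potential_lipschitz[OF B] by blast
  ultimately show ?thesis using at_target by linarith
qed

lemma weight_le_cost_excess:
  assumes k: "k < nl" "k \<noteq> nearest"
  shows "\<exists>s>0. \<forall>x. feasible x \<longrightarrow> s * \<bar>net_outflow x k\<bar> \<le> flow_cost x - nearest_dist"
proof -
  obtain g where g: "g > 0" "\<forall>c. walk k p c \<longrightarrow> nearest_dist + g \<le> c"
    using nearest_dist_gap[OF k] by blast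
  define s where "s = Min (insert g (d ` {..<m}))"
  have "s \<in> insert g (d ` {..<m})" unfolding s_def by (rule Min_in) auto
  hence "s > 0" using g cost_pos by auto
  moreover have "\<forall>e<m. s \<le> d e" unfolding s_def by auto
  moreover have "s \<le> g" unfolding s_def by simp
  hence "\<forall>c. walk k p c \<longrightarrow> nearest_dist + s \<le> c" using g by force
  ultimately have "s * \<bar>net_outflow x k\<bar> \<le> flow_cost x - nearest_dist" if "feasible x" for x
    using signed_weight_le_cost_excess[OF k _ _ _ _ that, of s 1]
      signed_weight_le_cost_excess[OF k _ _ _ _ that, of s "-1"]
    by (cases "net_outflow x k \<ge> 0") auto
  thus ?thesis using \<open>s > 0\<close> by blast
qed

lemma opt_flow_cost_excess_le:
  "\<exists>C. \<forall>lam>0. flow_cost (opt_flow lam) - nearest_dist \<le> C / lam"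
proof -
  obtain c where "walk nearest p c" "c = nearest_dist"
    using path_imp_walk nearest_path by (auto simp: lab_path_def)
  then obtain x0 where x0: "unit_flow x0 nearest p" "flow_cost x0 \<le> nearest_dist"
    using walk_imp_unit_flow by blast
  have "feasible x0" using unit_flow_imp_feasible[OF x0(1) nearest_labeled] .
  define C where "C = (\<Sum>e<m. d e * (x0 e)\<^sup>2)"
  have "flow_cost (opt_flow lam) - nearest_dist \<le> C / lam" if lam: "lam > 0" for lam
  proof -
    have "0 \<le> (\<Sum>e<m. d e * (opt_flow lam e)\<^sup>2)"
      using cost_pos by (intro sum_nonneg) (auto simp: less_imp_le)
    moreover have "flow_obj m d lam (opt_flow lam) \<le> flow_obj m d lam x0"
      using flow_is_minimizer(2) lam \<open>feasible x0\<close> by simp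
    moreover have "lam * flow_cost x0 \<le> lam * nearest_dist" using x0 lam by simp
    ultimately have "lam * (flow_cost (opt_flow lam) - nearest_dist) \<le> C"
      unfolding flow_obj_eq C_def by (simp add: algebra_simps)
    thus ?thesis using lam by (simp add: field_simps)
  qed
  thus ?thesis by blast
qed

lemma tendsto_weight_other:
  assumes "k < nl" "k \<noteq> nearest"
  shows "((\<lambda>lam. net_outflow (opt_flow lam) k) \<longlongrightarrow> 0) at_top"
proof -
  obtain s where s: "s > 0" "\<forall>x. feasible x \<longrightarrow> s * \<bar>net_outflow x k\<bar> \<le> flow_cost x - nearest_dist"
    using weight_le_cost_excess[OF assms] by blast
  obtain C where C: "\<forall>lam>0. flow_cost (opt_flow lam) - nearest_dist \<le> C / lam"
    using opt_flow_cost_excess_le by blast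
  have "norm (net_outflow (opt_flow lam) k) \<le> (C / s) / lam" if "lam > 0" for lam
  proof -
    have "s * \<bar>net_outflow (opt_flow lam) k\<bar> \<le> C / lam"
      using s C flow_is_minimizer(1) that by (meson less_imp_le order_trans)
    thus ?thesis using s that by (simp add: field_simps)
  qed
  hence "eventually (\<lambda>lam. norm (net_outflow (opt_flow lam) k) \<le> (C / s) / lam) at_top"
    by (intro eventually_at_top_linorderI[of 1]) auto
  moreover have "((\<lambda>lam. (C / s) / lam) \<longlongrightarrow> 0) at_top"
    by (intro tendsto_divide_0[OF tendsto_const] filterlim_at_top_imp_at_infinity filterlim_ident)
  ultimately show ?thesis by (rule Lim_null_comparison)
qed

lemma tendsto_weight_nearest: "((\<lambda>lam. net_outflow (opt_flow lam) nearest) \<longlongrightarrow> 1) at_top"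
proof -
  let ?rest = "\<lambda>lam. \<Sum>k\<in>{..<nl} - {nearest}. net_outflow (opt_flow lam) k"
  have "((\<lambda>lam. 1 - ?rest lam) \<longlongrightarrow> 1 - (\<Sum>k\<in>{..<nl} - {nearest}. 0)) at_top"
    by (intro tendsto_diff tendsto_const tendsto_sum tendsto_weight_other) auto
  moreover have "eventually (\<lambda>lam. 1 - ?rest lam = net_outflow (opt_flow lam) nearest) at_top"
  proof (rule eventually_mono[OF eventually_ge_at_top[of 0]])
    fix lam :: real assume "0 \<le> lam"
    hence "(\<Sum>k<nl. net_outflow (opt_flow lam) k) = 1"
      using flow_is_minimizer(1) net_outflow_labeled_sum by blast
    thus "1 - ?rest lam = net_outflow (opt_flow lam) nearest"
      using nearest_labeled by (simp add: sum.remove)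
  qed
  ultimately show ?thesis by (simp add: Lim_transform_eventually)
qed

end

theorem proposition2:
  fixes n nl m p :: nat and src tgt :: "nat \<Rightarrow> nat" and d f :: "nat \<Rightarrow> real"
    and vs0 es0 :: "nat list"
  assumes "1 \<le> nl" and "nl < n"
    and "\<forall>e < m. src e < n \<and> tgt e < n \<and> src e \<noteq> tgt e"
    and "\<forall>e < m. d e > 0"
    and "connected_graph n m src tgt"
    and "nl \<le> p" and "p < n"
    and "lab_path nl m src tgt p vs0 es0"
    and "\<forall>vs es. lab_path nl m src tgt p vs es \<and> (vs, es) \<noteq> (vs0, es0)
                 \<longrightarrow> path_cost d es0 < path_cost d es"
  shows "((\<lambda>lam. flow_weight n nl m src tgt d p lam (hd vs0)) \<longlongrightarrow> 1) at_top
     \<and> (\<forall>i < nl. i \<noteq> hd vs0 \<longrightarrow> ((\<lambda>lam. flow_weight n nl m src tgt d p lam i) \<longlongrightarrow> 0) at_top)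
     \<and> ((\<lambda>lam. flow_pred n nl m src tgt d f p lam) \<longlongrightarrow> f (hd vs0)) at_top"
proof -
  interpret unique_nearest n m src tgt d nl p vs0 es0
    using assms by unfold_locales auto
  have weight: "flow_weight n nl m src tgt d p lam i = net_outflow (opt_flow lam) i" for lam i
    by (simp add: flow_weight_def net_outflow_def)
  have "((\<lambda>lam. \<Sum>i<nl. net_outflow (opt_flow lam) i * f i)
      \<longlongrightarrow> (\<Sum>i<nl. (if i = nearest then 1 else 0) * f i)) at_top"
    using tendsto_weight_nearest tendsto_weight_other by (intro tendsto_sum tendsto_mult_right) auto
  moreover have "(\<Sum>i<nl. (if i = nearest then 1 else 0) * f i) = f nearest"
    using nearest_labeled by (simp add: if_distrib[of "\<lambda>t. t * _"] cong: if_cong)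
  ultimately show ?thesis
    using tendsto_weight_nearest tendsto_weight_other by (simp add: weight flow_pred_def)
qed

end
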